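(* Consider an instance with $n$ agents, $m$ items and binary additive valuations (notation as in the context). For every stable fractional allocation $x$ (items divisible) with profile $(h_1,\dots,h_n)$: (1) $h_i=d$ for each integer $d\ge0$ and each $i\in\mathsf{layer}_d$; (2) $h_i\in[d-1,d]$ for each integer $d\ge1$ and each $i\in\mathsf{layer}^-_d$.
   Context: Agents $[n]$, items $[m]$; each agent $i$ has a set $L_i\subseteq[m]$ of liked items. Indivisible setting: an allocation $\chi=(\chi_1,\dots,\chi_n)$ is a tuple of pairwise disjoint subsets of $[m]$, clean if $\chi_i\subseteq L_i$, max-USW if it maximizes $\sum_i|\chi_i\cap L_i|$; allocations are clean and max-USW. Arc $(i,i')$, $i\ne i'$, if some $o\in\chi_i$ lies in $L_{i'}$; a transfer $u\to v$ is a simple directed path from $u$ to $v$ with at least one arc; narrowing if $|\chi_u|\ge|\chi_v|+2$; stable if no narrowing transfer. For integer $d\ge0$, $\mathsf{layer}_d$ is the set of agents $i$ with $|\chi_i|=d$ in every stable indivisible allocation $\chi$; for integer $d\ge1$, $\mathsf{layer}^-_d$ is the set of agents $i$ with $\{|\chi_i|:\chi\text{ stable indivisible}\}=\{d-1,d\}$. Divisible setting: a fractional allocation is $x=(x_{o,i})$ with $x_{o,i}\ge0$, $\sum_i x_{o,i}\le1$; clean if $x_{o,i}=0$ for $o\notin L_i$; max-USW if it maximizes $\sum_i\sum_{o\in L_i}x_{o,i}$; allocations are clean and max-USW; profile $h_i=\sum_o x_{o,i}$. A transfer $u\to v$: distinct agents $u=i_1,\dots,i_k=v$ ($k\ge2$),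 items $o_l$ with $x_{o_l,i_l}>0$, $o_l\in L_{i_{l+1}}$, amount $0<\Delta\le\min_l x_{o_l,i_l}$, moving $\Delta$ of $o_l$ from $i_l$ to $i_{l+1}$; narrowing if $h_u-\Delta\ge h_v+\Delta$; stable if no narrowing transfer. *)

theory Defs
  imports Complex_Main
begin

(* Agents are 0..<n, items are 0..<m; L i is the set of items liked by agent i. *)

definition ind_alloc :: "nat \<Rightarrow> nat \<Rightarrow> (nat \<Rightarrow> nat set) \<Rightarrow> bool" where
  "ind_alloc n m chi \<longleftrightarrow>
     (\<forall>i<n. chi i \<subseteq> {..<m}) \<and>
     (\<forall>i<n. \<forall>j<n. i \<noteq> j \<longrightarrow> chi i \<inter> chi j = {})"

definition ind_clean :: "nat \<Rightarrow> (nat \<Rightarrow> nat set) \<Rightarrow> (nat \<Rightarrow> nat set) \<Rightarrow> bool" where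
  "ind_clean n L chi \<longleftrightarrow> (\<forall>i<n. chi i \<subseteq> L i)"

definition ind_usw :: "nat \<Rightarrow> (nat \<Rightarrow> nat set) \<Rightarrow> (nat \<Rightarrow> nat set) \<Rightarrow> nat" where
  "ind_usw n L chi = (\<Sum>i<n. card (chi i \<inter> L i))"

definition ind_max_usw :: "nat \<Rightarrow> nat \<Rightarrow> (nat \<Rightarrow> nat set) \<Rightarrow> (nat \<Rightarrow> nat set) \<Rightarrow> bool" where
  "ind_max_usw n m L chi \<longleftrightarrow>
     (\<forall>chi'. ind_alloc n m chi' \<longrightarrow> ind_usw n L chi' \<le> ind_usw n L chi)"

definition ind_arc :: "nat \<Rightarrow> (nat \<Rightarrow> nat set) \<Rightarrow> (nat \<Rightarrow> nat set) \<Rightarrow> nat \<Rightarrow> nat \<Rightarrow> bool" where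
  "ind_arc n L chi i i' \<longleftrightarrow> i < n \<and> i' < n \<and> i \<noteq> i' \<and> (\<exists>ob\<in>chi i. ob \<in> L i')"

definition ind_transfer ::
  "nat \<Rightarrow> (nat \<Rightarrow> nat set) \<Rightarrow> (nat \<Rightarrow> nat set) \<Rightarrow> nat \<Rightarrow> nat \<Rightarrow> nat list \<Rightarrow> bool" where
  "ind_transfer n L chi u v p \<longleftrightarrow>
     distinct p \<and> length p \<ge> 2 \<and> hd p = u \<and> last p = v \<and>
     (\<forall>l. Suc l < length p \<longrightarrow> ind_arc n L chi (p ! l) (p ! Suc l))"

definition ind_narrowing :: "(nat \<Rightarrow> nat set) \<Rightarrow> nat \<Rightarrow> nat \<Rightarrow> bool" where
  "ind_narrowing chi u v \<longleftrightarrow> card (chi u) \<ge> card (chi v) + 2"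

definition ind_stable :: "nat \<Rightarrow> nat \<Rightarrow> (nat \<Rightarrow> nat set) \<Rightarrow> (nat \<Rightarrow> nat set) \<Rightarrow> bool" where
  "ind_stable n m L chi \<longleftrightarrow>
     ind_alloc n m chi \<and> ind_clean n L chi \<and> ind_max_usw n m L chi \<and>
     \<not> (\<exists>u v p. ind_transfer n L chi u v p \<and> ind_narrowing chi u v)"

definition layer :: "nat \<Rightarrow> nat \<Rightarrow> (nat \<Rightarrow> nat set) \<Rightarrow> nat \<Rightarrow> nat set" where
  "layer n m L d = {i. i < n \<and> (\<forall>chi. ind_stable n m L chi \<longrightarrow> card (chi i) = d)}"

definition layer_minus :: "nat \<Rightarrow> nat \<Rightarrow> (nat \<Rightarrow> nat set) \<Rightarrow> nat \<Rightarrow> nat set" where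
  "layer_minus n m L d =
     {i. i < n \<and> {card (chi i) | chi. ind_stable n m L chi} = {d - 1, d}}"

(* x o i = fraction of item o given to agent i *)
definition frac_alloc :: "nat \<Rightarrow> nat \<Rightarrow> (nat \<Rightarrow> nat \<Rightarrow> real) \<Rightarrow> bool" where
  "frac_alloc n m x \<longleftrightarrow>
     (\<forall>ob<m. \<forall>i<n. x ob i \<ge> 0) \<and> (\<forall>ob<m. (\<Sum>i<n. x ob i) \<le> 1)"

definition frac_clean :: "nat \<Rightarrow> nat \<Rightarrow> (nat \<Rightarrow> nat set) \<Rightarrow> (nat \<Rightarrow> nat \<Rightarrow> real) \<Rightarrow> bool" where
  "frac_clean n m L x \<longleftrightarrow> (\<forall>ob<m. \<forall>i<n. ob \<notin> L i \<longrightarrow> x ob i = 0)"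

definition frac_usw :: "nat \<Rightarrow> nat \<Rightarrow> (nat \<Rightarrow> nat set) \<Rightarrow> (nat \<Rightarrow> nat \<Rightarrow> real) \<Rightarrow> real" where
  "frac_usw n m L x = (\<Sum>i<n. \<Sum>ob\<in>L i \<inter> {..<m}. x ob i)"

definition frac_max_usw :: "nat \<Rightarrow> nat \<Rightarrow> (nat \<Rightarrow> nat set) \<Rightarrow> (nat \<Rightarrow> nat \<Rightarrow> real) \<Rightarrow> bool" where
  "frac_max_usw n m L x \<longleftrightarrow>
     (\<forall>x'. frac_alloc n m x' \<longrightarrow> frac_usw n m L x' \<le> frac_usw n m L x)"

definition profile :: "nat \<Rightarrow> (nat \<Rightarrow> nat \<Rightarrow> real) \<Rightarrow> nat \<Rightarrow> real" where
  "profile m x i = (\<Sum>ob<m. x ob i)"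

definition frac_transfer ::
  "nat \<Rightarrow> nat \<Rightarrow> (nat \<Rightarrow> nat set) \<Rightarrow> (nat \<Rightarrow> nat \<Rightarrow> real) \<Rightarrow> nat \<Rightarrow> nat \<Rightarrow>
   nat list \<Rightarrow> nat list \<Rightarrow> real \<Rightarrow> bool" where
  "frac_transfer n m L x u v p os \<Delta> \<longleftrightarrow>
     distinct p \<and> length p \<ge> 2 \<and> hd p = u \<and> last p = v \<and> set p \<subseteq> {..<n} \<and>
     length os = length p - 1 \<and> set os \<subseteq> {..<m} \<and> 0 < \<Delta> \<and>
     (\<forall>l < length os. x (os ! l) (p ! l) > 0 \<and> os ! l \<in> L (p ! Suc l) \<and>
                      \<Delta> \<le> x (os ! l) (p ! l))"

definition frac_narrowing :: "nat \<Rightarrow> (nat \<Rightarrow> nat \<Rightarrow> real) \<Rightarrow> nat \<Rightarrow> nat \<Rightarrow> real \<Rightarrow> bool" where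
  "frac_narrowing m x u v \<Delta> \<longleftrightarrow> profile m x u - \<Delta> \<ge> profile m x v + \<Delta>"

definition frac_stable :: "nat \<Rightarrow> nat \<Rightarrow> (nat \<Rightarrow> nat set) \<Rightarrow> (nat \<Rightarrow> nat \<Rightarrow> real) \<Rightarrow> bool" where
  "frac_stable n m L x \<longleftrightarrow>
     frac_alloc n m x \<and> frac_clean n m L x \<and> frac_max_usw n m L x \<and>
     \<not> (\<exists>u v p os \<Delta>. frac_transfer n m L x u v p os \<Delta> \<and> frac_narrowing m x u v \<Delta>)"

end

theory Submission
  imports Defs
begin

(* Among the clean max-USW indivisible allocations, one minimising the sum of the squared
   bundle sizes is stable (a narrowing transfer would decrease that sum), and moving one item
   along a transfer between two agents whose bundle sizes differ by one yields another minimiser.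
   Compare a stable fractional allocation x with such a minimiser chi.  If agent i has
   |chi_i| < h_i, a counting argument over the agents reachable from i by arcs "a holds a positive
   share of an item that chi gives to b" yields an agent k with h_k < |chi_k|.  The path from i
   to k is a transfer for x and, reversed, a transfer for chi, so stability of both gives
   h_i <= h_k < |chi_k| <= |chi_i| + 1; shifting an item from k to i gives a stable allocation
   in which i receives at least h_i items.  Symmetrically some stable allocation gives i at most
   h_i items, and both layer statements follow. *)

section \<open>Paths in relations and shifted sums\<close>

lemma rtranclp_imp_distinct_path:
  assumes "R\<^sup>*\<^sup>* u v" "u \<noteq> v"
  shows "\<exists>p. distinct p \<and> 2 \<le> length p \<and> hd p = u \<and> last p = v \<and> successively R p"
proof -
  have "\<exists>p. distinct p \<and> p \<noteq> [] \<and> hd p = u \<and> last p = v \<and> successively R p"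
    using assms(1)
  proof (induction rule: rtranclp_induct)
    case base
    show ?case by (intro exI[of _ "[u]"]) auto
  next
    case (step y z)
    then obtain p where p: "distinct p" "p \<noteq> []" "hd p = u" "last p = y" "successively R p"
      by blast
    show ?case
    proof (cases "z \<in> set p")
      case True
      then obtain ys zs where "p = (ys @ [z]) @ zs" by (metis split_list append_Cons append_Nil append_assoc)
      with p show ?thesis
        by (intro exI[of _ "ys @ [z]"]) (auto simp: successively_append_iff hd_append split: if_splits)
    next
      case False
      with p step show ?thesis
        by (intro exI[of _ "p @ [z]"]) (auto simp: successively_append_iff)
    qed
  qed
  then obtain p where p: "distinct p" "p \<noteq> []" "hd p = u" "last p = v" "successively R p"
    by blast
  have "2 \<le> length p"
    using p(2-4) assms(2) by (cases p; cases "tl p") auto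
  with p show ?thesis by blast
qed

lemma successively_set_subset:
  assumes "successively R xs" "2 \<le> length xs" "\<And>a b. R a b \<Longrightarrow> a \<in> A \<and> b \<in> A"
  shows "set xs \<subseteq> A"
  using assms(1,2)
proof (induction xs rule: induct_list012)
  case (3 a b zs)
  then show ?case using assms(3)[of a b] by (cases zs) auto
qed auto

lemma successively_witnesses:
  assumes "successively (\<lambda>a b. \<exists>w. P a w b) xs"
  shows "\<exists>ws. length ws = length xs - 1 \<and> (\<forall>l<length ws. P (xs ! l) (ws ! l) (xs ! Suc l))"
  using assms
proof (induction xs rule: induct_list012)
  case (3 a b zs)
  then obtain w ws where "P a w b" "length ws = length (b # zs) - 1"
    "\<forall>l<length ws. P ((b # zs) ! l) (ws ! l) ((b # zs) ! Suc l)"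
    by auto
  then show ?case by (intro exI[of _ "w # ws"]) (auto simp: less_Suc_eq_0_disj)
qed auto

lemma sum_of_bool_shift:
  fixes f g :: "'a \<Rightarrow> nat"
  assumes "finite A" "u \<in> A" "v \<in> A" "\<And>j. f j + of_bool (j = u) = g j + of_bool (j = v)"
  shows "sum f A = sum g A"
proof -
  have "(\<Sum>j\<in>A. f j + of_bool (j = u)) = (\<Sum>j\<in>A. g j + of_bool (j = v))"
    using assms(4) by simp
  with assms(1-3) show ?thesis by (simp add: sum.distrib)
qed

lemma sum_squares_of_bool_shift:
  fixes f g :: "'a \<Rightarrow> nat"
  assumes "finite A" "u \<in> A" "v \<in> A" "u \<noteq> v"
    and "\<And>j. f j + of_bool (j = u) = g j + of_bool (j = v)"
  shows "(\<Sum>j\<in>A. f j ^ 2) + 2 * g u = (\<Sum>j\<in>A. g j ^ 2) + 2 * g v + 2"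
proof -
  have "f j ^ 2 + 2 * g j * of_bool (j = u) = g j ^ 2 + (2 * g j + 1) * of_bool (j = v) + of_bool (j = u)"
    for j
  proof (cases "j = u")
    case True
    then have "g j = f j + 1" using assms(4) assms(5)[of j] by simp
    with True assms(4) show ?thesis by (simp add: power2_eq_square algebra_simps)
  next
    case False
    then have "f j = g j + of_bool (j = v)" using assms(5)[of j] by simp
    with False show ?thesis by (cases "j = v") (simp_all add: power2_eq_square algebra_simps)
  qed
  then have "(\<Sum>j\<in>A. f j ^ 2 + 2 * g j * of_bool (j = u))
      = (\<Sum>j\<in>A. g j ^ 2 + (2 * g j + 1) * of_bool (j = v) + of_bool (j = u))"
    by simp
  with assms(1-3) show ?thesis by (simp add: sum.distrib)
qed

section \<open>Indivisible allocations\<close>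

definition ind_efficient :: "nat \<Rightarrow> nat \<Rightarrow> (nat \<Rightarrow> nat set) \<Rightarrow> (nat \<Rightarrow> nat set) \<Rightarrow> bool" where
  "ind_efficient n m L chi \<longleftrightarrow> ind_alloc n m chi \<and> ind_clean n L chi \<and> ind_max_usw n m L chi"

lemma ind_transfer_iff:
  "ind_transfer n L chi u v p \<longleftrightarrow>
     distinct p \<and> 2 \<le> length p \<and> hd p = u \<and> last p = v \<and> successively (ind_arc n L chi) p"
  unfolding ind_transfer_def successively_conv_nth by blast

lemma ind_stable_iff:
  "ind_stable n m L chi \<longleftrightarrow> ind_efficient n m L chi \<and>
     (\<forall>u v p. ind_transfer n L chi u v p \<longrightarrow> card (chi u) \<le> card (chi v) + 1)"
proof -
  have "b + 2 \<le> a \<longleftrightarrow> \<not> a \<le> b + 1" for a b :: nat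
    by arith
  then show ?thesis
    unfolding ind_stable_def ind_efficient_def ind_narrowing_def by blast
qed

lemma ind_alloc_finite: "ind_alloc n m chi \<Longrightarrow> j < n \<Longrightarrow> finite (chi j)"
  unfolding ind_alloc_def by (meson finite_lessThan finite_subset)

lemma ind_usw_clean: "ind_clean n L chi \<Longrightarrow> ind_usw n L chi = (\<Sum>i<n. card (chi i))"
  unfolding ind_usw_def ind_clean_def by (intro sum.cong) (auto simp: Int_absorb2)

lemma ind_max_usw_liked_allocated:
  assumes "ind_alloc n m chi" "ind_max_usw n m L chi" "j < n" "ob < m" "ob \<in> L j"
  shows "\<exists>k<n. ob \<in> chi k"
proof (rule ccontr)
  assume unallocated: "\<not> (\<exists>k<n. ob \<in> chi k)"
  define chi' where "chi' = chi(j := insert ob (chi j))"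
  have "ind_alloc n m chi'"
    using assms(1,3,4) unallocated unfolding ind_alloc_def chi'_def by auto
  moreover have "card (chi' j \<inter> L j) = card (chi j \<inter> L j) + 1"
    using assms(3,5) unallocated ind_alloc_finite[OF assms(1,3)] unfolding chi'_def by auto
  then have "ind_usw n L chi < ind_usw n L chi'"
    unfolding ind_usw_def using assms(3)
    by (intro sum_strict_mono_ex1) (auto simp: chi'_def)
  ultimately show False
    using assms(2) unfolding ind_max_usw_def by fastforce
qed

lemma ind_move_item:
  assumes "ind_alloc n m chi" "ind_clean n L chi" "u < n" "w < n" "u \<noteq> w" "ob \<in> chi u" "ob \<in> L w"
  defines "chi' \<equiv> chi(u := chi u - {ob}, w := insert ob (chi w))"
  shows "ind_alloc n m chi'" "ind_clean n L chi'"
    "card (chi' j) + of_bool (j = u) = card (chi j) + of_bool (j = w)"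
proof -
  have not_elsewhere: "ob \<notin> chi j" if "j < n" "j \<noteq> u" for j
    using assms(1,3,6) that unfolding ind_alloc_def by blast
  have disjoint: False if "i < n" "j < n" "i \<noteq> j" "y \<in> chi i" "y \<in> chi j" for i j y
    using assms(1) that unfolding ind_alloc_def by blast
  show "ind_alloc n m chi'"
    using assms(1,3,6) not_elsewhere unfolding ind_alloc_def chi'_def by (auto; meson disjoint)
  show "ind_clean n L chi'"
    using assms(2,7) unfolding ind_clean_def chi'_def by auto
  consider "j = u" | "j = w" | "j \<noteq> u" "j \<noteq> w" by blast
  then show "card (chi' j) + of_bool (j = u) = card (chi j) + of_bool (j = w)"
  proof cases
    case 1
    then show ?thesis
      using assms(5) card_Suc_Diff1[OF ind_alloc_finite[OF assms(1,3)] assms(6)] unfolding chi'_def by simp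
  next
    case 2
    then show ?thesis
      using not_elsewhere[OF assms(4)] assms(5) ind_alloc_finite[OF assms(1,4)] unfolding chi'_def by simp
  qed (simp add: chi'_def)
qed

lemma ind_shift_along_path:
  assumes "ind_alloc n m chi" "ind_clean n L chi"
    and "distinct p" "p \<noteq> []" "successively (ind_arc n L chi) p"
  shows "\<exists>chi'. ind_alloc n m chi' \<and> ind_clean n L chi' \<and> (\<forall>j. j \<notin> set p \<longrightarrow> chi' j = chi j) \<and>
    (\<forall>j. card (chi' j) + of_bool (j = hd p) = card (chi j) + of_bool (j = last p))"
  using assms(3-5)
proof (induction p)
  case Nil
  then show ?case by simp
next
  case (Cons u q)
  show ?case
  proof (cases q)
    case Nil
    with assms(1,2) show ?thesis by (intro exI[of _ chi]) simp
  next
    case (Cons w q')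
    with Cons.prems(3) obtain ob where ob: "ob \<in> chi u" "ob \<in> L w" and uw: "u < n" "w < n" "u \<noteq> w"
      unfolding ind_arc_def by auto
    from Cons.IH Cons.prems \<open>q = w # q'\<close> obtain c where
      c: "ind_alloc n m c" "ind_clean n L c" "\<forall>j. j \<notin> set q \<longrightarrow> c j = chi j"
        "\<forall>j. card (c j) + of_bool (j = w) = card (chi j) + of_bool (j = last q)"
      by (auto simp: successively_Cons)
    have "c u = chi u"
      using c(3) Cons.prems(1) by auto
    with ob have "ob \<in> c u" by simp
    define c' where "c' = c(u := c u - {ob}, w := insert ob (c w))"
    note moved = ind_move_item[OF c(1,2) uw \<open>ob \<in> c u\<close> ob(2), folded c'_def]
    have "c' j = chi j" if "j \<notin> set (u # q)" for j
      using that c(3) \<open>q = w # q'\<close> unfolding c'_def by auto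
    moreover have "card (c' j) + of_bool (j = u) = card (chi j) + of_bool (j = last q)" for j
      using moved(3)[of j] c(4)[rule_format, of j] by simp
    ultimately show ?thesis
      using moved(1,2) \<open>q = w # q'\<close> by (intro exI[of _ c']) auto
  qed
qed

definition sum_sq_card :: "nat \<Rightarrow> (nat \<Rightarrow> nat set) \<Rightarrow> nat" where
  "sum_sq_card n chi = (\<Sum>j<n. card (chi j) ^ 2)"

(* The sum of squares changes by 2 * (card (chi v) - card (chi u) + 1), written without subtraction. *)
lemma ind_transfer_shift:
  assumes "ind_efficient n m L chi" "ind_transfer n L chi u v p"
  shows "\<exists>chi'. ind_efficient n m L chi' \<and>
    card (chi' u) + 1 = card (chi u) \<and> card (chi' v) = card (chi v) + 1 \<and>
    sum_sq_card n chi' + 2 * card (chi u) = sum_sq_card n chi + 2 * card (chi v) + 2"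
proof -
  have p: "distinct p" "2 \<le> length p" "hd p = u" "last p = v" "successively (ind_arc n L chi) p"
    using assms(2) by (auto simp: ind_transfer_iff)
  have "set p \<subseteq> {..<n}"
    using successively_set_subset[OF p(5,2)] unfolding ind_arc_def by blast
  moreover have "hd p \<in> set p" "last p \<in> set p"
    using p(2) by (auto intro: hd_in_set last_in_set)
  moreover have "hd p \<noteq> last p"
    using p(1,2) by (cases p; cases "tl p") auto
  ultimately have uv: "u < n" "v < n" "u \<noteq> v"
    using p(3,4) by auto
  have chi: "ind_alloc n m chi" "ind_clean n L chi" "ind_max_usw n m L chi"
    using assms(1) unfolding ind_efficient_def by auto
  obtain chi' where chi': "ind_alloc n m chi'" "ind_clean n L chi'"
    "\<And>j. card (chi' j) + of_bool (j = u) = card (chi j) + of_bool (j = v)"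
    using ind_shift_along_path[OF chi(1,2) p(1) _ p(5)] p(2-4) by fastforce
  have "ind_usw n L chi' = ind_usw n L chi"
    unfolding ind_usw_clean[OF chi'(2)] ind_usw_clean[OF chi(2)]
    using uv by (intro sum_of_bool_shift[where u = u and v = v]) (auto simp: chi'(3))
  with chi(3) have "ind_max_usw n m L chi'"
    unfolding ind_max_usw_def by simp
  moreover have "sum_sq_card n chi' + 2 * card (chi u) = sum_sq_card n chi + 2 * card (chi v) + 2"
    unfolding sum_sq_card_def using uv by (intro sum_squares_of_bool_shift) (auto simp: chi'(3))
  ultimately show ?thesis
    using chi'(1,2) chi'(3)[of u] chi'(3)[of v] uv(3) unfolding ind_efficient_def by auto
qed

definition ind_min_sq :: "nat \<Rightarrow> nat \<Rightarrow> (nat \<Rightarrow> nat set) \<Rightarrow> (nat \<Rightarrow> nat set) \<Rightarrow> bool" where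
  "ind_min_sq n m L chi \<longleftrightarrow> ind_efficient n m L chi \<and>
     (\<forall>chi'. ind_efficient n m L chi' \<longrightarrow> sum_sq_card n chi \<le> sum_sq_card n chi')"

lemma ind_min_sq_stable:
  assumes "ind_min_sq n m L chi"
  shows "ind_stable n m L chi"
  unfolding ind_stable_iff
proof (intro conjI allI impI)
  show "ind_efficient n m L chi"
    using assms unfolding ind_min_sq_def by simp
  fix u v p
  assume "ind_transfer n L chi u v p"
  then obtain chi' where "ind_efficient n m L chi'"
    "sum_sq_card n chi' + 2 * card (chi u) = sum_sq_card n chi + 2 * card (chi v) + 2"
    using ind_transfer_shift \<open>ind_efficient n m L chi\<close> by blast
  with assms show "card (chi u) \<le> card (chi v) + 1"
    unfolding ind_min_sq_def by force
qed

lemma ind_min_sq_swap: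
  assumes "ind_min_sq n m L chi" "ind_transfer n L chi u v p" "card (chi u) = card (chi v) + 1"
  shows "\<exists>chi'. ind_min_sq n m L chi' \<and> card (chi' u) = card (chi v) \<and> card (chi' v) = card (chi u)"
proof -
  obtain chi' where chi': "ind_efficient n m L chi'"
    "card (chi' u) + 1 = card (chi u)" "card (chi' v) = card (chi v) + 1"
    "sum_sq_card n chi' + 2 * card (chi u) = sum_sq_card n chi + 2 * card (chi v) + 2"
    using ind_transfer_shift assms(1,2) unfolding ind_min_sq_def by blast
  with assms(1,3) have "ind_min_sq n m L chi'"
    unfolding ind_min_sq_def by simp
  with chi'(2,3) assms(3) show ?thesis by auto
qed

lemma ind_efficient_exists: "\<exists>chi. ind_efficient n m L chi"
proof -
  have "ind_usw n L chi < Suc (n * m)" if "ind_alloc n m chi" for chi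
  proof -
    have "card (chi i \<inter> L i) \<le> m" if "i < n" for i
      using \<open>ind_alloc n m chi\<close> that card_mono[of "{..<m}" "chi i \<inter> L i"]
      unfolding ind_alloc_def by auto
    then have "ind_usw n L chi \<le> (\<Sum>i<n. m)"
      unfolding ind_usw_def by (intro sum_mono) auto
    then show ?thesis by simp
  qed
  moreover have "ind_alloc n m (\<lambda>_. {})"
    unfolding ind_alloc_def by auto
  ultimately obtain chi where chi: "ind_alloc n m chi" "ind_max_usw n m L chi"
    using Lattices_Big.ex_has_greatest_nat[of "ind_alloc n m" _ "ind_usw n L"]
    unfolding ind_max_usw_def by blast
  have "ind_alloc n m (\<lambda>i. chi i \<inter> L i)" "ind_clean n L (\<lambda>i. chi i \<inter> L i)"
    using chi(1) unfolding ind_alloc_def ind_clean_def by blast+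
  moreover have "ind_usw n L (\<lambda>i. chi i \<inter> L i) = ind_usw n L chi"
    unfolding ind_usw_def by (simp add: Int_assoc)
  ultimately show ?thesis
    using chi(2) unfolding ind_efficient_def ind_max_usw_def by auto
qed

lemma ind_min_sq_exists: "\<exists>chi. ind_min_sq n m L chi"
proof -
  obtain chi where "ind_efficient n m L chi"
    using ind_efficient_exists by blast
  then show ?thesis
    using ex_has_least_nat[of "ind_efficient n m L" chi "sum_sq_card n"]
    unfolding ind_min_sq_def by blast
qed

lemma ind_arc_reach_transfer:
  assumes "(ind_arc n L chi)\<^sup>*\<^sup>* u v" "u \<noteq> v"
  shows "\<exists>p. ind_transfer n L chi u v p"
  using rtranclp_imp_distinct_path[OF assms] unfolding ind_transfer_iff by blast

lemma ind_stable_reach_card_le: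
  assumes "ind_stable n m L chi" "(ind_arc n L chi)\<^sup>*\<^sup>* u v"
  shows "card (chi u) \<le> card (chi v) + 1"
  using assms ind_arc_reach_transfer[OF assms(2)] unfolding ind_stable_iff by (cases "u = v") auto

section \<open>Fractional allocations\<close>

definition frac_arc :: "nat \<Rightarrow> nat \<Rightarrow> (nat \<Rightarrow> nat set) \<Rightarrow> (nat \<Rightarrow> nat \<Rightarrow> real) \<Rightarrow> nat \<Rightarrow> nat \<Rightarrow> bool" where
  "frac_arc n m L x a b \<longleftrightarrow> a < n \<and> b < n \<and> (\<exists>ob<m. 0 < x ob a \<and> ob \<in> L b)"

lemma frac_stable_path_profile_le:
  assumes "frac_stable n m L x" "distinct p" "2 \<le> length p" "successively (frac_arc n m L x) p"
  shows "profile m x (hd p) \<le> profile m x (last p)"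
proof (rule ccontr)
  define gap where "gap = profile m x (hd p) - profile m x (last p)"
  assume "\<not> ?thesis"
  then have "0 < gap" unfolding gap_def by simp
  have "successively (\<lambda>a b. \<exists>ob. ob < m \<and> 0 < x ob a \<and> ob \<in> L b) p"
    using assms(4) by (rule successively_mono) (auto simp: frac_arc_def)
  then obtain os where os: "length os = length p - 1"
    "\<forall>l<length os. os ! l < m \<and> 0 < x (os ! l) (p ! l) \<and> os ! l \<in> L (p ! Suc l)"
    using successively_witnesses[of "\<lambda>a ob b. ob < m \<and> 0 < x ob a \<and> ob \<in> L b"] by blast
  \<comment> \<open>the largest amount that can be moved along p and is still narrowing\<close>
  define \<Delta> where "\<Delta> = Min (insert (gap / 2) ((\<lambda>l. x (os ! l) (p ! l)) ` {..<length os}))"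
  have "0 < \<Delta>"
    using \<open>0 < gap\<close> os(2) unfolding \<Delta>_def by (auto simp: Min_gr_iff)
  moreover have "\<Delta> \<le> x (os ! l) (p ! l)" if "l < length os" for l
    unfolding \<Delta>_def using that by (intro Min_le) auto
  moreover have "set p \<subseteq> {..<n}"
    using successively_set_subset[OF assms(4,3)] unfolding frac_arc_def by blast
  moreover have "set os \<subseteq> {..<m}"
    using os(2) by (auto simp: in_set_conv_nth)
  ultimately have "frac_transfer n m L x (hd p) (last p) p os \<Delta>"
    unfolding frac_transfer_def using assms(2,3) os by auto
  moreover have "\<Delta> \<le> gap / 2"
    unfolding \<Delta>_def by (intro Min_le) auto
  then have "frac_narrowing m x (hd p) (last p) \<Delta>"
    unfolding frac_narrowing_def gap_def by (simp add: field_simps)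
  ultimately show False
    using assms(1) unfolding frac_stable_def by blast
qed

lemma frac_stable_reach_profile_le:
  assumes "frac_stable n m L x" "(frac_arc n m L x)\<^sup>*\<^sup>* u v"
  shows "profile m x u \<le> profile m x v"
proof (cases "u = v")
  case False
  then show ?thesis
    using rtranclp_imp_distinct_path[OF assms(2)] frac_stable_path_profile_le[OF assms(1)] by blast
qed simp

lemma frac_max_usw_liked_full:
  assumes "frac_alloc n m x" "frac_max_usw n m L x" "ob < m" "j < n" "ob \<in> L j"
  shows "(\<Sum>i<n. x ob i) = 1"
proof (rule ccontr)
  define s where "s = (\<Sum>i<n. x ob i)"
  assume "s \<noteq> 1"
  moreover have "s \<le> 1"
    using assms(1,3) unfolding frac_alloc_def s_def by auto
  ultimately have "s < 1" by simp
  define y where "y = (\<lambda>ob' i. x ob' i + (if ob' = ob \<and> i = j then 1 - s else 0))"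
  have "(\<Sum>i<n. y ob' i) = (\<Sum>i<n. x ob' i) + (if ob' = ob then 1 - s else 0)" for ob'
    unfolding y_def using assms(4) by (simp add: sum.distrib)
  then have "frac_alloc n m y"
    using assms(1) \<open>s < 1\<close> unfolding frac_alloc_def y_def s_def by auto
  moreover have "(\<Sum>ob'\<in>L i \<inter> {..<m}. y ob' i) = (\<Sum>ob'\<in>L i \<inter> {..<m}. x ob' i) + (if i = j then 1 - s else 0)"
    for i
    unfolding y_def using assms(3,5) by (simp add: sum.distrib)
  then have "frac_usw n m L y = frac_usw n m L x + (1 - s)"
    unfolding frac_usw_def using assms(4) by (simp add: sum.distrib)
  ultimately show False
    using assms(2) \<open>s < 1\<close> unfolding frac_max_usw_def by force
qed

section \<open>Comparing fractional and indivisible allocations\<close>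

definition held_arc :: "nat \<Rightarrow> nat \<Rightarrow> (nat \<Rightarrow> nat \<Rightarrow> real) \<Rightarrow> (nat \<Rightarrow> nat set) \<Rightarrow> nat \<Rightarrow> nat \<Rightarrow> bool" where
  "held_arc n m x chi a b \<longleftrightarrow> a < n \<and> b < n \<and> (\<exists>ob<m. 0 < x ob a \<and> ob \<notin> chi a \<and> ob \<in> chi b)"

lemma held_arc_reach:
  assumes "frac_clean n m L x" "ind_clean n L chi" "(held_arc n m x chi)\<^sup>*\<^sup>* a b"
  shows "(frac_arc n m L x)\<^sup>*\<^sup>* a b" "(ind_arc n L chi)\<^sup>*\<^sup>* b a"
proof -
  have arcs: "frac_arc n m L x a' b' \<and> ind_arc n L chi b' a'" if held: "held_arc n m x chi a' b'" for a' b'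
  proof -
    obtain ob where "a' < n" "b' < n" "ob < m" "0 < x ob a'" "ob \<notin> chi a'" "ob \<in> chi b'"
      using held unfolding held_arc_def by blast
    moreover have "ob \<in> L a'" "ob \<in> L b'"
      using assms(1,2) calculation unfolding frac_clean_def ind_clean_def by force+
    ultimately show ?thesis
      unfolding frac_arc_def ind_arc_def by blast
  qed
  show "(frac_arc n m L x)\<^sup>*\<^sup>* a b"
    using assms(3) by (induction rule: rtranclp_induct) (auto dest: arcs intro: rtranclp.rtrancl_into_rtrancl)
  show "(ind_arc n L chi)\<^sup>*\<^sup>* b a"
    using assms(3) by (induction rule: rtranclp_induct) (auto dest: arcs intro: converse_rtranclp_into_rtranclp)
qed

lemma held_reach_bounds:
  assumes "frac_stable n m L x" "ind_stable n m L chi" "(held_arc n m x chi)\<^sup>*\<^sup>* a b"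
  shows "profile m x a \<le> profile m x b" "(ind_arc n L chi)\<^sup>*\<^sup>* b a" "card (chi b) \<le> card (chi a) + 1"
proof -
  have "frac_clean n m L x" "ind_clean n L chi"
    using assms(1,2) unfolding frac_stable_def ind_stable_def by auto
  note reach = held_arc_reach[OF this assms(3)]
  show "profile m x a \<le> profile m x b"
    by (rule frac_stable_reach_profile_le[OF assms(1) reach(1)])
  show "(ind_arc n L chi)\<^sup>*\<^sup>* b a"
    by (rule reach(2))
  show "card (chi b) \<le> card (chi a) + 1"
    by (rule ind_stable_reach_card_le[OF assms(2) reach(2)])
qed

lemma ind_alloc_card_UN:
  assumes "ind_alloc n m chi" "R \<subseteq> {..<n}"
  shows "card (\<Union>j\<in>R. chi j) = (\<Sum>j\<in>R. card (chi j))"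
proof (rule card_UN_disjoint)
  show "finite R" "\<forall>j\<in>R. finite (chi j)"
    using assms ind_alloc_finite[OF assms(1)] finite_subset[OF assms(2)] by auto
  show "\<forall>j\<in>R. \<forall>k\<in>R. j \<noteq> k \<longrightarrow> chi j \<inter> chi k = {}"
    using assms unfolding ind_alloc_def by blast
qed

lemma held_share_allocated_within:
  assumes "frac_clean n m L x" "ind_alloc n m chi" "ind_max_usw n m L chi"
    and "R \<subseteq> {..<n}" "\<And>j k. j \<in> R \<Longrightarrow> held_arc n m x chi j k \<Longrightarrow> k \<in> R"
    and "j \<in> R" "ob < m" "0 < x ob j"
  shows "ob \<in> (\<Union>k\<in>R. chi k)"
proof (cases "ob \<in> chi j")
  case False
  have "j < n"
    using assms(4,6) by auto
  with assms(1,7,8) have "ob \<in> L j"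
    unfolding frac_clean_def by force
  then obtain k where "k < n" "ob \<in> chi k"
    using ind_max_usw_liked_allocated[OF assms(2,3) \<open>j < n\<close> assms(7)] by blast
  with False assms(7,8) \<open>j < n\<close> have "held_arc n m x chi j k"
    unfolding held_arc_def by blast
  with assms(5,6) \<open>ob \<in> chi k\<close> show ?thesis
    by blast
qed (use assms(6) in blast)

lemma allocated_item_held_within:
  assumes "frac_alloc n m x" "frac_max_usw n m L x" "ind_alloc n m chi" "ind_clean n L chi"
    and "R \<subseteq> {..<n}" "\<And>j k. k \<in> R \<Longrightarrow> held_arc n m x chi j k \<Longrightarrow> j \<in> R"
    and "k \<in> R" "ob \<in> chi k"
  shows "(\<Sum>j\<in>R. x ob j) = 1"
proof -
  have "k < n" "ob < m" "ob \<in> L k"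
    using assms(3-5,7,8) unfolding ind_alloc_def ind_clean_def by auto
  have "x ob j = 0" if "j < n" "j \<notin> R" for j
  proof (rule ccontr)
    assume "x ob j \<noteq> 0"
    with assms(1) \<open>ob < m\<close> \<open>j < n\<close> have "0 < x ob j"
      unfolding frac_alloc_def by force
    moreover have "ob \<notin> chi j"
      using assms(3,7,8) \<open>k < n\<close> that unfolding ind_alloc_def by blast
    ultimately have "held_arc n m x chi j k"
      using \<open>ob < m\<close> \<open>k < n\<close> assms(8) that(1) unfolding held_arc_def by blast
    with assms(6,7) that(2) show False
      by blast
  qed
  then have "(\<Sum>j\<in>R. x ob j) = (\<Sum>j<n. x ob j)"
    using assms(5) by (intro sum.mono_neutral_left) auto
  also have "\<dots> = 1"
    by (rule frac_max_usw_liked_full[OF assms(1,2) \<open>ob < m\<close> \<open>k < n\<close> \<open>ob \<in> L k\<close>])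
  finally show ?thesis .
qed

lemma profile_sum_le_card_sum:
  assumes "frac_alloc n m x" "frac_clean n m L x" "ind_alloc n m chi" "ind_max_usw n m L chi"
    and "R \<subseteq> {..<n}" "\<And>j k. j \<in> R \<Longrightarrow> held_arc n m x chi j k \<Longrightarrow> k \<in> R"
  shows "(\<Sum>j\<in>R. profile m x j) \<le> (\<Sum>j\<in>R. real (card (chi j)))"
proof -
  define Q where "Q = (\<Union>j\<in>R. chi j)"
  have "Q \<subseteq> {..<m}"
    using assms(3,5) unfolding ind_alloc_def Q_def by blast
  have x_nonneg: "0 \<le> x ob j" if "ob < m" "j < n" for ob j
    using assms(1) that unfolding frac_alloc_def by auto
  have "profile m x j = (\<Sum>ob\<in>Q. x ob j)" if "j \<in> R" for j
    unfolding profile_def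
  proof (rule sum.mono_neutral_right)
    show "\<forall>ob\<in>{..<m} - Q. x ob j = 0"
    proof
      fix ob
      assume "ob \<in> {..<m} - Q"
      then have "\<not> 0 < x ob j"
        using held_share_allocated_within[OF assms(2-5)] assms(6) that unfolding Q_def by blast
      with x_nonneg \<open>ob \<in> {..<m} - Q\<close> that assms(5) show "x ob j = 0"
        by force
    qed
  qed (use \<open>Q \<subseteq> {..<m}\<close> in auto)
  then have "(\<Sum>j\<in>R. profile m x j) = (\<Sum>j\<in>R. \<Sum>ob\<in>Q. x ob j)"
    by simp
  also have "\<dots> = (\<Sum>ob\<in>Q. \<Sum>j\<in>R. x ob j)"
    by (rule sum.swap)
  also have "\<dots> \<le> (\<Sum>ob\<in>Q. \<Sum>j<n. x ob j)"
    using assms(5) \<open>Q \<subseteq> {..<m}\<close> x_nonneg by (intro sum_mono sum_mono2) auto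
  also have "\<dots> \<le> (\<Sum>ob\<in>Q. 1)"
    using assms(1) \<open>Q \<subseteq> {..<m}\<close> unfolding frac_alloc_def by (intro sum_mono) auto
  also have "\<dots> = (\<Sum>j\<in>R. real (card (chi j)))"
    using ind_alloc_card_UN[OF assms(3,5)] unfolding Q_def by simp
  finally show ?thesis .
qed

lemma card_sum_le_profile_sum:
  assumes "frac_alloc n m x" "frac_max_usw n m L x" "ind_alloc n m chi" "ind_clean n L chi"
    and "R \<subseteq> {..<n}" "\<And>j k. k \<in> R \<Longrightarrow> held_arc n m x chi j k \<Longrightarrow> j \<in> R"
  shows "(\<Sum>j\<in>R. real (card (chi j))) \<le> (\<Sum>j\<in>R. profile m x j)"
proof -
  define Q where "Q = (\<Union>j\<in>R. chi j)"
  have "Q \<subseteq> {..<m}"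
    using assms(3,5) unfolding ind_alloc_def Q_def by blast
  have "(\<Sum>j\<in>R. x ob j) = 1" if "ob \<in> Q" for ob
    using allocated_item_held_within[OF assms(1-5)] assms(6) that unfolding Q_def by blast
  then have "(\<Sum>j\<in>R. real (card (chi j))) = (\<Sum>ob\<in>Q. \<Sum>j\<in>R. x ob j)"
    using ind_alloc_card_UN[OF assms(3,5)] unfolding Q_def by simp
  also have "\<dots> = (\<Sum>j\<in>R. \<Sum>ob\<in>Q. x ob j)"
    by (rule sum.swap)
  also have "\<dots> \<le> (\<Sum>j\<in>R. profile m x j)"
    unfolding profile_def using assms(1,5) \<open>Q \<subseteq> {..<m}\<close>
    by (intro sum_mono sum_mono2) (auto simp: frac_alloc_def)
  finally show ?thesis .
qed

lemma reaches_profile_lt_card: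
  assumes "frac_stable n m L x" "ind_stable n m L chi" "i < n" "real (card (chi i)) < profile m x i"
  shows "\<exists>k. profile m x k < real (card (chi k)) \<and> (held_arc n m x chi)\<^sup>*\<^sup>* i k"
proof (rule ccontr)
  assume none: "\<not> ?thesis"
  define R where "R = {k. (held_arc n m x chi)\<^sup>*\<^sup>* i k}"
  have "R \<subseteq> {..<n}"
    using assms(3) unfolding R_def by (auto elim: rtranclp.cases simp: held_arc_def)
  moreover have "k \<in> R" if "j \<in> R" "held_arc n m x chi j k" for j k
    using that unfolding R_def by auto
  ultimately have "(\<Sum>j\<in>R. profile m x j) \<le> (\<Sum>j\<in>R. real (card (chi j)))"
    using assms(1,2) unfolding frac_stable_def ind_stable_def
    by (intro profile_sum_le_card_sum[of n m x L chi]) auto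
  moreover have "(\<Sum>j\<in>R. real (card (chi j))) < (\<Sum>j\<in>R. profile m x j)"
    using none assms(4) finite_subset[OF \<open>R \<subseteq> {..<n}\<close>]
    by (intro sum_strict_mono_ex1) (auto simp: R_def not_less)
  ultimately show False by simp
qed

lemma reached_from_profile_gt_card:
  assumes "frac_stable n m L x" "ind_stable n m L chi" "i < n" "profile m x i < real (card (chi i))"
  shows "\<exists>k. real (card (chi k)) < profile m x k \<and> (held_arc n m x chi)\<^sup>*\<^sup>* k i"
proof (rule ccontr)
  assume none: "\<not> ?thesis"
  define R where "R = {k. (held_arc n m x chi)\<^sup>*\<^sup>* k i}"
  have "R \<subseteq> {..<n}"
    using assms(3) unfolding R_def by (auto elim: converse_rtranclpE simp: held_arc_def)
  moreover have "j \<in> R" if "k \<in> R" "held_arc n m x chi j k" for j k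
    using that unfolding R_def by (auto intro: converse_rtranclp_into_rtranclp)
  ultimately have "(\<Sum>j\<in>R. real (card (chi j))) \<le> (\<Sum>j\<in>R. profile m x j)"
    using assms(1,2) unfolding frac_stable_def ind_stable_def
    by (intro card_sum_le_profile_sum[of n m x L chi]) auto
  moreover have "(\<Sum>j\<in>R. profile m x j) < (\<Sum>j\<in>R. real (card (chi j)))"
    using none assms(4) finite_subset[OF \<open>R \<subseteq> {..<n}\<close>]
    by (intro sum_strict_mono_ex1) (auto simp: R_def not_less)
  ultimately show False by simp
qed

lemma exists_stable_card_ge_profile:
  assumes "frac_stable n m L x" "i < n"
  shows "\<exists>chi. ind_stable n m L chi \<and> profile m x i \<le> real (card (chi i))"
proof -
  obtain chi where chi: "ind_min_sq n m L chi"
    using ind_min_sq_exists by blast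
  note stable = ind_min_sq_stable[OF chi]
  show ?thesis
  proof (cases "profile m x i \<le> real (card (chi i))")
    case False
    then obtain k where k: "profile m x k < real (card (chi k))" "(held_arc n m x chi)\<^sup>*\<^sup>* i k"
      using reaches_profile_lt_card[OF assms(1) stable assms(2)] by auto
    note bounds = held_reach_bounds[OF assms(1) stable k(2)]
    with False k(1) have "card (chi k) = card (chi i) + 1"
      by linarith
    moreover from this obtain p where "ind_transfer n L chi k i p"
      using ind_arc_reach_transfer[OF bounds(2)] by force
    ultimately obtain chi' where "ind_min_sq n m L chi'" "card (chi' i) = card (chi k)"
      using ind_min_sq_swap[OF chi] by blast
    with ind_min_sq_stable k(1) bounds(1) show ?thesis
      by force
  qed (use stable in blast)
qed

lemma exists_stable_card_le_profile:
  assumes "frac_stable n m L x" "i < n"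
  shows "\<exists>chi. ind_stable n m L chi \<and> real (card (chi i)) \<le> profile m x i"
proof -
  obtain chi where chi: "ind_min_sq n m L chi"
    using ind_min_sq_exists by blast
  note stable = ind_min_sq_stable[OF chi]
  show ?thesis
  proof (cases "real (card (chi i)) \<le> profile m x i")
    case False
    then obtain k where k: "real (card (chi k)) < profile m x k" "(held_arc n m x chi)\<^sup>*\<^sup>* k i"
      using reached_from_profile_gt_card[OF assms(1) stable assms(2)] by auto
    note bounds = held_reach_bounds[OF assms(1) stable k(2)]
    with False k(1) have "card (chi i) = card (chi k) + 1"
      by linarith
    moreover from this obtain p where "ind_transfer n L chi i k p"
      using ind_arc_reach_transfer[OF bounds(2)] by force
    ultimately obtain chi' where "ind_min_sq n m L chi'" "card (chi' i) = card (chi k)"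
      using ind_min_sq_swap[OF chi] by blast
    with ind_min_sq_stable k(1) bounds(1) show ?thesis
      by force
  qed (use stable in blast)
qed

lemma layer_profile_eq:
  assumes "frac_stable n m L x" "i \<in> layer n m L d"
  shows "profile m x i = real d"
proof -
  from assms(2) have "i < n" and sizes: "\<And>chi. ind_stable n m L chi \<Longrightarrow> card (chi i) = d"
    unfolding layer_def by auto
  with exists_stable_card_ge_profile[OF assms(1)] exists_stable_card_le_profile[OF assms(1)]
  show ?thesis
    by (metis order_antisym)
qed

lemma layer_minus_profile_bounds:
  assumes "frac_stable n m L x" "i \<in> layer_minus n m L d"
  shows "real d - 1 \<le> profile m x i \<and> profile m x i \<le> real d"
proof -
  from assms(2) have "i < n" and sizes: "\<And>chi. ind_stable n m L chi \<Longrightarrow> card (chi i) \<in> {d - 1, d}"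
    unfolding layer_minus_def by blast+
  obtain chi1 where "ind_stable n m L chi1" "profile m x i \<le> real (card (chi1 i))"
    using exists_stable_card_ge_profile[OF assms(1) \<open>i < n\<close>] by blast
  moreover obtain chi2 where "ind_stable n m L chi2" "real (card (chi2 i)) \<le> profile m x i"
    using exists_stable_card_le_profile[OF assms(1) \<open>i < n\<close>] by blast
  ultimately have "card (chi1 i) \<le> d" "d \<le> card (chi2 i) + 1"
    using sizes by fastforce+
  then have "real (card (chi1 i)) \<le> real d" "real d \<le> real (card (chi2 i)) + 1"
    by simp_all
  with \<open>profile m x i \<le> real (card (chi1 i))\<close> \<open>real (card (chi2 i)) \<le> profile m x i\<close>
  show ?thesis
    by linarith
qed

theorem lemma7:
  fixes n m :: nat and L :: "nat \<Rightarrow> nat set" and x :: "nat \<Rightarrow> nat \<Rightarrow> real"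
  assumes "\<forall>i<n. L i \<subseteq> {..<m}"
    and "frac_stable n m L x"
  shows "(\<forall>d i. i \<in> layer n m L d \<longrightarrow> profile m x i = real d) \<and>
         (\<forall>d i. d \<ge> 1 \<longrightarrow> i \<in> layer_minus n m L d \<longrightarrow>
                real d - 1 \<le> profile m x i \<and> profile m x i \<le> real d)"
  using layer_profile_eq[OF assms(2)] layer_minus_profile_bounds[OF assms(2)] by blast

end
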